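(* Let $f:\mathbb{R}^d\to\mathbb{R}$ be convex, symmetric and sign invariant, $g(w,x)=f_\sigma(wx^\top-\bar w\bar x^\top)$, $X=wx^\top-\bar w\bar x^\top$, $Y\in\partial f_\sigma(X)$, and let $U\in O(d_1)$, $V\in O(d_2)$ (columns $U_i,V_i$) satisfy $X=U\mathrm{diag}(\sigma(X))V^\top$ and $Y=U\mathrm{diag}(\sigma(Y))V^\top$, with $d_1,d_2\ge2$. Then (1) $\max\{|\sigma_1(Y)\langle V_1,x\rangle|,|\sigma_2(Y)\langle V_2,x\rangle|\}\le\|Yx\|$ and $\max\{|\sigma_1(Y)\langle U_1,w\rangle|,|\sigma_2(Y)\langle U_2,w\rangle|\}\le\|Y^\top w\|$; (2) $g(w,x)-g(\bar w,\bar x)\le\sigma_1(Y)\sigma_1(X)+\sigma_2(Y)\sigma_2(X)$.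
   Context: Let $d=\min\{d_1,d_2\}$ and let $\sigma:\mathbb{R}^{d_1\times d_2}\to\mathbb{R}^d_+$ give singular values in nonincreasing order. $f$ is symmetric if $f(\pi s)=f(s)$ for all permutation matrices $\pi$, sign invariant if $f(Ds)=f(s)$ for all diagonal $D$ with entries in $\{\pm1\}$; $f_\sigma=f\circ\sigma$, which is convex when $f$ is, and $\partial f_\sigma(X)$ is its convex subdifferential. $\mathrm{diag}(s)$ is the $d_1\times d_2$ matrix with $s$ on the main diagonal. $\bar w\in\mathbb{R}^{d_1}$, $\bar x\in\mathbb{R}^{d_2}$ are fixed. *)

theory Defs
  imports Complex_Main "Jordan_Normal_Form.Matrix"
begin

definition orth_group :: "nat \<Rightarrow> real mat set" where
  "orth_group n = {U. U \<in> carrier_mat n n \<and> transpose_mat U * U = 1\<^sub>m n}"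

definition diag_rect :: "nat \<Rightarrow> nat \<Rightarrow> real vec \<Rightarrow> real mat" where
  "diag_rect d1 d2 s = mat d1 d2 (\<lambda>(i,j). if i = j then s $ i else 0)"

definition outer :: "real vec \<Rightarrow> real vec \<Rightarrow> real mat" where
  "outer w x = mat (dim_vec w) (dim_vec x) (\<lambda>(i,j). w $ i * x $ j)"

definition vnorm :: "real vec \<Rightarrow> real" where
  "vnorm v = sqrt (v \<bullet> v)"

definition frob_inner :: "real mat \<Rightarrow> real mat \<Rightarrow> real" where
  "frob_inner A B = (\<Sum>i<dim_row A. \<Sum>j<dim_col A. A $$ (i,j) * B $$ (i,j))"

definition sing_vals :: "real mat \<Rightarrow> real vec" where
  "sing_vals X = (THE s. s \<in> carrier_vec (min (dim_row X) (dim_col X)) \<and>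
      (\<forall>i < dim_vec s. 0 \<le> s $ i) \<and>
      (\<forall>i j. i \<le> j \<longrightarrow> j < dim_vec s \<longrightarrow> s $ j \<le> s $ i) \<and>
      (\<exists>U V. U \<in> orth_group (dim_row X) \<and> V \<in> orth_group (dim_col X) \<and>
          X = U * diag_rect (dim_row X) (dim_col X) s * transpose_mat V))"

definition f_sigma :: "(real vec \<Rightarrow> real) \<Rightarrow> real mat \<Rightarrow> real" where
  "f_sigma f X = f (sing_vals X)"

definition convex_vec :: "nat \<Rightarrow> (real vec \<Rightarrow> real) \<Rightarrow> bool" where
  "convex_vec d f \<longleftrightarrow> (\<forall>s \<in> carrier_vec d. \<forall>t \<in> carrier_vec d. \<forall>a::real. 0 \<le> a \<longrightarrow> a \<le> 1 \<longrightarrow>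
      f (a \<cdot>\<^sub>v s + (1 - a) \<cdot>\<^sub>v t) \<le> a * f s + (1 - a) * f t)"

definition symmetric_vec :: "nat \<Rightarrow> (real vec \<Rightarrow> real) \<Rightarrow> bool" where
  "symmetric_vec d f \<longleftrightarrow> (\<forall>s \<in> carrier_vec d. \<forall>p. p permutes {..<d} \<longrightarrow>
      f (vec d (\<lambda>i. s $ p i)) = f s)"

definition sign_invariant_vec :: "nat \<Rightarrow> (real vec \<Rightarrow> real) \<Rightarrow> bool" where
  "sign_invariant_vec d f \<longleftrightarrow> (\<forall>s \<in> carrier_vec d. \<forall>D :: nat \<Rightarrow> real.
      (\<forall>i<d. D i = 1 \<or> D i = -1) \<longrightarrow> f (vec d (\<lambda>i. D i * s $ i)) = f s)"

definition subdiff :: "nat \<Rightarrow> nat \<Rightarrow> (real mat \<Rightarrow> real) \<Rightarrow> real mat \<Rightarrow> real mat set" where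
  "subdiff d1 d2 h X = {Y. Y \<in> carrier_mat d1 d2 \<and>
      (\<forall>Z \<in> carrier_mat d1 d2. h Z \<ge> h X + frob_inner Y (Z - X))}"

definition g_fun :: "(real vec \<Rightarrow> real) \<Rightarrow> real vec \<Rightarrow> real vec \<Rightarrow> real vec \<Rightarrow> real vec \<Rightarrow> real" where
  "g_fun f wbar xbar w x = f_sigma f (outer w x - outer wbar xbar)"

end

theory Submission
  imports Defs "Jordan_Normal_Form.Jordan_Normal_Form"
begin

text \<open>Writing \<open>Y = U diag(\<sigma>(Y)) V\<^sup>T\<close> gives \<open>\<parallel>Y x\<parallel>\<^sup>2 = \<Sum>\<^sub>i \<sigma>\<^sub>i(Y)\<^sup>2 \<langle>V\<^sub>i, x\<rangle>\<^sup>2\<close>, which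
  yields (1), and symmetrically for \<open>Y\<^sup>T w\<close>. For (2), the subgradient inequality at
  \<open>Z = 0 = wbar xbar\<^sup>T - wbar xbar\<^sup>T\<close> gives \<open>g(w,x) - g(wbar,xbar) \<le> \<langle>Y, X\<rangle>\<close>; the common SVD turns
  \<open>\<langle>Y, X\<rangle>\<close> into \<open>\<Sum>\<^sub>i \<sigma>\<^sub>i(Y) \<sigma>\<^sub>i(X)\<close>, and since \<open>X\<close> has rank at most two, every 3 x 3
  minor of \<open>U\<^sup>T X V = diag(\<sigma>(X))\<close> vanishes, so \<open>\<sigma>\<^sub>i(X) = 0\<close> for \<open>i \<ge> 2\<close>.

  The only delicate point is that \<open>sing_vals\<close> is a definite description: to know that
  \<open>\<sigma>(X)\<close> is nonnegative and nonincreasing one must show that a sorted nonnegative SVD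
  spectrum exists and is unique. Uniqueness holds because its squares, padded with zeros,
  are the roots of the characteristic polynomial of \<open>X X\<^sup>T\<close>.\<close>

lemma index_mult_mat_sum:
  assumes "A \<in> carrier_mat m k" "B \<in> carrier_mat k n" "i < m" "j < n"
  shows "(A * B) $$ (i,j) = (\<Sum>l<k. A $$ (i,l) * B $$ (l,j))"
  using assms by (simp add: scalar_prod_def atLeast0LessThan)

lemma orth_group_carrier: "U \<in> orth_group m \<Longrightarrow> U \<in> carrier_mat m m"
  by (simp add: orth_group_def)

lemma orth_group_col_inner:
  assumes U: "U \<in> orth_group m" and i: "i < m" and j: "j < m"
  shows "(\<Sum>r<m. U$$(r,i) * U$$(r,j)) = (if i = j then 1 else 0)"
proof -
  have "(transpose_mat U * U) $$ (i,j) = (\<Sum>r<m. U$$(r,i) * U$$(r,j))"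
    using orth_group_carrier[OF U] i j by (subst index_mult_mat_sum[of _ m m _ m]) auto
  then show ?thesis using U i j by (simp add: orth_group_def)
qed

lemma orth_groupI_col_inner:
  assumes W: "W \<in> carrier_mat m m"
    and inner: "\<And>i j. i < m \<Longrightarrow> j < m \<Longrightarrow> (\<Sum>r<m. W$$(r,i) * W$$(r,j)) = (if i = j then 1 else 0)"
  shows "W \<in> orth_group m"
proof -
  have "transpose_mat W * W = 1\<^sub>m m"
  proof (rule eq_matI)
    fix i j assume "i < dim_row (1\<^sub>m m :: real mat)" "j < dim_col (1\<^sub>m m :: real mat)"
    then have i: "i < m" and j: "j < m" by auto
    have "(transpose_mat W * W) $$ (i,j) = (\<Sum>r<m. W$$(r,i) * W$$(r,j))"
      using W i j by (subst index_mult_mat_sum[of _ m m _ m]) auto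
    then show "(transpose_mat W * W) $$ (i,j) = 1\<^sub>m m $$ (i,j)" using inner[OF i j] i j by simp
  qed (use W in auto)
  then show ?thesis using W by (simp add: orth_group_def)
qed

lemma orth_group_mult_transpose: "U \<in> orth_group m \<Longrightarrow> U * transpose_mat U = 1\<^sub>m m"
  using mat_mult_left_right_inverse[of "transpose_mat U" m U] by (auto simp: orth_group_def)

lemma orth_group_perm_sign_cols:
  assumes U: "U \<in> orth_group m" and p: "p permutes {..<m}" and sg: "\<And>i. sg i * sg i = (1::real)"
  shows "mat m m (\<lambda>(r,i). sg i * U$$(r, p i)) \<in> orth_group m"
proof (rule orth_groupI_col_inner)
  fix i j assume i: "i < m" and j: "j < m"
  have "p i < m" "p j < m" using i j permutes_in_image[OF p] by auto
  moreover have "p i = p j \<longleftrightarrow> i = j" using permutes_inj[OF p] by (simp add: inj_eq)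
  moreover have "(\<Sum>r<m. mat m m (\<lambda>(r,i). sg i * U$$(r, p i)) $$ (r,i) * mat m m (\<lambda>(r,i). sg i * U$$(r, p i)) $$ (r,j))
      = sg i * sg j * (\<Sum>r<m. U$$(r,p i) * U$$(r,p j))"
    using i j by (simp add: sum_distrib_left mult_ac)
  ultimately show "(\<Sum>r<m. mat m m (\<lambda>(r,i). sg i * U$$(r, p i)) $$ (r,i) * mat m m (\<lambda>(r,i). sg i * U$$(r, p i)) $$ (r,j))
      = (if i = j then 1 else 0)"
    using orth_group_col_inner[OF U, of "p i" "p j"] sg[of j] by simp
qed simp

lemma sum_square_orth_comb:
  assumes U: "U \<in> orth_group m" and k: "k \<le> m"
  shows "(\<Sum>a<m. (\<Sum>i<k. U$$(a,i) * c i)^2) = (\<Sum>i<k. (c i)^2)"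
proof -
  have "(\<Sum>a<m. (\<Sum>i<k. U$$(a,i) * c i)^2) = (\<Sum>a<m. \<Sum>i<k. \<Sum>j<k. (U$$(a,i) * c i) * (U$$(a,j) * c j))"
    by (simp add: power2_eq_square sum_product)
  also have "\<dots> = (\<Sum>i<k. \<Sum>j<k. \<Sum>a<m. (U$$(a,i) * c i) * (U$$(a,j) * c j))"
    by (subst sum.swap) (rule sum.cong[OF refl], rule sum.swap)
  also have "\<dots> = (\<Sum>i<k. \<Sum>j<k. c i * c j * (\<Sum>a<m. U$$(a,i) * U$$(a,j)))"
    by (simp add: sum_distrib_left mult_ac)
  also have "\<dots> = (\<Sum>i<k. (c i)^2)"
    using k by (simp add: orth_group_col_inner[OF U] power2_eq_square if_distrib cong: if_cong)
  finally show ?thesis .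
qed

lemma diag_rect_carrier [simp]: "diag_rect m n s \<in> carrier_mat m n"
  by (simp add: diag_rect_def)

lemma diag_rect_transpose: "transpose_mat (diag_rect m n s) = diag_rect n m s"
  by (rule eq_matI) (auto simp: diag_rect_def)

lemma svd_carrier:
  "U \<in> carrier_mat m m \<Longrightarrow> V \<in> carrier_mat n n \<Longrightarrow> U * diag_rect m n s * transpose_mat V \<in> carrier_mat m n"
  by (metis carrier_matI index_mult_mat(2,3) index_transpose_mat(3) carrier_matD)

lemma index_svd:
  assumes U: "U \<in> carrier_mat m m" and V: "V \<in> carrier_mat n n" and a: "a < m" and b: "b < n"
  shows "(U * diag_rect m n s * transpose_mat V) $$ (a,b) = (\<Sum>i<min m n. U$$(a,i) * s$i * V$$(b,i))"
proof -
  have UD: "(U * diag_rect m n s) $$ (a,l) = (if l < m then U$$(a,l) * s$l else 0)" if l: "l < n" for l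
  proof -
    have "(U * diag_rect m n s) $$ (a,l) = (\<Sum>i<m. U $$ (a,i) * diag_rect m n s $$ (i,l))"
      using index_mult_mat_sum[OF U diag_rect_carrier a l] .
    also have "\<dots> = (\<Sum>i<m. if i = l then U $$ (a,i) * s $ i else 0)"
      by (rule sum.cong) (auto simp: diag_rect_def l)
    finally show ?thesis by simp
  qed
  have "(U * diag_rect m n s * transpose_mat V) $$ (a,b)
      = (\<Sum>l<n. (U * diag_rect m n s) $$ (a,l) * transpose_mat V $$ (l,b))"
    by (rule index_mult_mat_sum[of _ m n]) (use U V a b in auto)
  also have "\<dots> = (\<Sum>l<n. if l < m then U$$(a,l) * s$l * V$$(b,l) else 0)"
    by (rule sum.cong) (use V b in \<open>auto simp: UD\<close>)
  also have "\<dots> = (\<Sum>l\<in>{..<n} \<inter> {l. l < m}. U$$(a,l) * s$l * V$$(b,l))"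
    by (simp add: sum.inter_restrict)
  also have "{..<n} \<inter> {l. l < m} = {..<min m n}" by auto
  finally show ?thesis .
qed

lemma transpose_svd:
  assumes U: "U \<in> carrier_mat m m" and V: "V \<in> carrier_mat n n"
  shows "transpose_mat (U * diag_rect m n s * transpose_mat V) = V * diag_rect n m s * transpose_mat U"
proof -
  have "transpose_mat (U * diag_rect m n s * transpose_mat V)
      = transpose_mat (transpose_mat V) * transpose_mat (U * diag_rect m n s)"
    by (rule transpose_mult[of _ m n _ n]) (use U V in auto)
  also have "transpose_mat (transpose_mat V) = V"
    by (rule transpose_transpose)
  also have "transpose_mat (U * diag_rect m n s) = diag_rect n m s * transpose_mat U"
    by (subst transpose_mult[of _ m m _ n]) (use U in \<open>auto simp: diag_rect_transpose\<close>)
  also have "V * (diag_rect n m s * transpose_mat U) = V * diag_rect n m s * transpose_mat U"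
    by (rule assoc_mult_mat[symmetric, of _ n n _ m _ m]) (use U V in auto)
  finally show ?thesis .
qed

lemma svd_row_inner:
  assumes U: "U \<in> carrier_mat m m" and U': "U' \<in> carrier_mat m m" and V: "V \<in> orth_group n"
    and Y: "Y = U * diag_rect m n s * transpose_mat V" and Y': "Y' = U' * diag_rect m n t * transpose_mat V"
    and a: "a < m" and c: "c < m"
  shows "(\<Sum>b<n. Y $$ (a,b) * Y' $$ (c,b)) = (\<Sum>i<min m n. U$$(a,i) * s$i * t$i * U'$$(c,i))"
proof -
  let ?k = "min m n"
  have VC: "V \<in> carrier_mat n n" using V by (rule orth_group_carrier)
  have "(\<Sum>b<n. Y $$ (a,b) * Y' $$ (c,b))
      = (\<Sum>b<n. \<Sum>i<?k. \<Sum>j<?k. (U$$(a,i) * s$i * V$$(b,i)) * (U'$$(c,j) * t$j * V$$(b,j)))"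
    using index_svd[OF U VC a] index_svd[OF U' VC c] Y Y' by (simp add: sum_product)
  also have "\<dots> = (\<Sum>i<?k. \<Sum>j<?k. \<Sum>b<n. (U$$(a,i) * s$i * V$$(b,i)) * (U'$$(c,j) * t$j * V$$(b,j)))"
    by (subst sum.swap) (rule sum.cong[OF refl], rule sum.swap)
  also have "\<dots> = (\<Sum>i<?k. \<Sum>j<?k. (U$$(a,i) * s$i * U'$$(c,j) * t$j) * (\<Sum>b<n. V$$(b,i) * V$$(b,j)))"
    by (simp add: sum_distrib_left mult_ac)
  also have "\<dots> = (\<Sum>i<?k. U$$(a,i) * s$i * t$i * U'$$(c,i))"
    by (simp add: orth_group_col_inner[OF V] if_distrib mult_ac cong: if_cong)
  finally show ?thesis .
qed

lemma frob_inner_svd: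
  assumes U: "U \<in> orth_group m" and V: "V \<in> orth_group n"
    and Y: "Y = U * diag_rect m n s * transpose_mat V" and X: "X = U * diag_rect m n t * transpose_mat V"
  shows "frob_inner Y X = (\<Sum>i<min m n. s$i * t$i)"
proof -
  have UC: "U \<in> carrier_mat m m" and VC: "V \<in> carrier_mat n n"
    using U V by (auto intro: orth_group_carrier)
  have "Y \<in> carrier_mat m n" using Y svd_carrier[OF UC VC] by simp
  then have "frob_inner Y X = (\<Sum>a<m. \<Sum>i<min m n. U$$(a,i) * s$i * t$i * U$$(a,i))"
    unfolding frob_inner_def by (auto simp: svd_row_inner[OF UC UC V Y X] intro!: sum.cong)
  also have "\<dots> = (\<Sum>i<min m n. s$i * t$i * (\<Sum>a<m. U$$(a,i) * U$$(a,i)))"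
    by (subst sum.swap) (simp add: sum_distrib_left mult_ac)
  also have "\<dots> = (\<Sum>i<min m n. s$i * t$i)"
    by (simp add: orth_group_col_inner[OF U])
  finally show ?thesis .
qed

lemma svd_coordinates:
  assumes U: "U \<in> orth_group m" and V: "V \<in> orth_group n"
    and X: "X = U * diag_rect m n s * transpose_mat V" and i: "i < m" and j: "j < n"
  shows "(\<Sum>r<m. \<Sum>t<n. U$$(r,i) * X$$(r,t) * V$$(t,j)) = (if i = j then s$i else 0)"
proof -
  let ?k = "min m n"
  have UC: "U \<in> carrier_mat m m" and VC: "V \<in> carrier_mat n n"
    using U V by (auto intro: orth_group_carrier)
  have row: "(\<Sum>t<n. U$$(r,i) * X$$(r,t) * V$$(t,j)) = U$$(r,i) * U$$(r,j) * (if j < ?k then s$j else 0)"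
    if r: "r < m" for r
  proof -
    have "(\<Sum>t<n. U$$(r,i) * X$$(r,t) * V$$(t,j))
        = (\<Sum>l<?k. \<Sum>t<n. U$$(r,i) * (U$$(r,l) * s$l * V$$(t,l)) * V$$(t,j))"
      using index_svd[OF UC VC r] X by (subst sum.swap) (simp add: sum_distrib_left sum_distrib_right)
    also have "\<dots> = (\<Sum>l<?k. (U$$(r,i) * U$$(r,l) * s$l) * (\<Sum>t<n. V$$(t,l) * V$$(t,j)))"
      by (simp add: sum_distrib_left mult_ac)
    also have "\<dots> = U$$(r,i) * U$$(r,j) * (if j < ?k then s$j else 0)"
      using j by (simp add: orth_group_col_inner[OF V] if_distrib cong: if_cong)
    finally show ?thesis .
  qed
  have "(\<Sum>r<m. \<Sum>t<n. U$$(r,i) * X$$(r,t) * V$$(t,j))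
      = (\<Sum>r<m. U$$(r,i) * U$$(r,j) * (if j < ?k then s$j else 0))"
    by (rule sum.cong[OF refl]) (simp add: row)
  also have "\<dots> = (if j < ?k then s$j else 0) * (\<Sum>r<m. U$$(r,i) * U$$(r,j))"
    by (simp add: sum_distrib_left mult_ac)
  also have "\<dots> = (if i = j then s$i else 0)"
    using i j by (auto simp: orth_group_col_inner[OF U])
  finally show ?thesis .
qed

lemma vnorm_svd_mult_vec:
  assumes U: "U \<in> orth_group m" and V: "V \<in> orth_group n"
    and Y: "Y = U * diag_rect m n s * transpose_mat V" and x: "x \<in> carrier_vec n"
  shows "vnorm (Y *\<^sub>v x) = sqrt (\<Sum>i<min m n. (s$i * (col V i \<bullet> x))^2)"
proof -
  have UC: "U \<in> carrier_mat m m" and VC: "V \<in> carrier_mat n n"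
    using U V by (auto intro: orth_group_carrier)
  have YC: "Y \<in> carrier_mat m n" using Y svd_carrier[OF UC VC] by simp
  have entry: "(Y *\<^sub>v x) $ a = (\<Sum>i<min m n. U$$(a,i) * (s$i * (col V i \<bullet> x)))" if a: "a < m" for a
  proof -
    have "(Y *\<^sub>v x) $ a = (\<Sum>b<n. Y$$(a,b) * x$b)"
      using YC a x by (simp add: scalar_prod_def atLeast0LessThan)
    also have "\<dots> = (\<Sum>b<n. \<Sum>i<min m n. U$$(a,i) * s$i * V$$(b,i) * x$b)"
      using a Y by (simp add: index_svd[OF UC VC] sum_distrib_right)
    also have "\<dots> = (\<Sum>i<min m n. U$$(a,i) * (s$i * (\<Sum>b<n. V$$(b,i) * x$b)))"
      by (subst sum.swap) (simp add: sum_distrib_left mult_ac)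
    also have "\<dots> = (\<Sum>i<min m n. U$$(a,i) * (s$i * (col V i \<bullet> x)))"
      using VC x by (simp add: scalar_prod_def atLeast0LessThan)
    finally show ?thesis .
  qed
  have "(Y *\<^sub>v x) \<bullet> (Y *\<^sub>v x) = (\<Sum>a<m. ((Y *\<^sub>v x) $ a)^2)"
    using YC by (simp add: scalar_prod_def atLeast0LessThan power2_eq_square)
  also have "\<dots> = (\<Sum>i<min m n. (s$i * (col V i \<bullet> x))^2)"
    by (simp add: entry sum_square_orth_comb[OF U])
  finally show ?thesis by (simp add: vnorm_def)
qed

lemma abs_sing_val_inner_col_le_vnorm:
  assumes U: "U \<in> orth_group m" and V: "V \<in> orth_group n"
    and Y: "Y = U * diag_rect m n s * transpose_mat V" and x: "x \<in> carrier_vec n"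
    and i: "i < min m n"
  shows "\<bar>s$i * (col V i \<bullet> x)\<bar> \<le> vnorm (Y *\<^sub>v x)"
proof -
  have "(s$i * (col V i \<bullet> x))^2 \<le> (\<Sum>j<min m n. (s$j * (col V j \<bullet> x))^2)"
    using i by (intro member_le_sum) auto
  then have "sqrt ((s$i * (col V i \<bullet> x))^2) \<le> sqrt (\<Sum>j<min m n. (s$j * (col V j \<bullet> x))^2)"
    by (rule real_sqrt_le_mono)
  then show ?thesis by (simp add: vnorm_svd_mult_vec[OF U V Y x])
qed

subsection \<open>Existence and uniqueness of sorted singular values\<close>

definition is_sing_vals :: "real mat \<Rightarrow> real vec \<Rightarrow> bool" where
  "is_sing_vals X s \<longleftrightarrow> s \<in> carrier_vec (min (dim_row X) (dim_col X)) \<and>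
      (\<forall>i < dim_vec s. 0 \<le> s $ i) \<and>
      (\<forall>i j. i \<le> j \<longrightarrow> j < dim_vec s \<longrightarrow> s $ j \<le> s $ i) \<and>
      (\<exists>U V. U \<in> orth_group (dim_row X) \<and> V \<in> orth_group (dim_col X) \<and>
          X = U * diag_rect (dim_row X) (dim_col X) s * transpose_mat V)"

lemma sing_vals_eq_The: "sing_vals X = (THE s. is_sing_vals X s)"
  by (simp add: sing_vals_def is_sing_vals_def)

text \<open>Eigenvalues of \<open>X X\<^sup>T\<close> for \<open>X = U diag(s) V\<^sup>T\<close>.\<close>
definition gram_eigvals :: "nat \<Rightarrow> nat \<Rightarrow> real vec \<Rightarrow> real vec" where
  "gram_eigvals m n s = vec m (\<lambda>i. if i < min m n then (s$i)^2 else 0)"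

lemma gram_svd:
  assumes U: "U \<in> orth_group m" and V: "V \<in> orth_group n"
    and X: "X = U * diag_rect m n s * transpose_mat V"
  shows "X * transpose_mat X = U * diag_rect m m (gram_eigvals m n s) * transpose_mat U"
proof -
  have UC: "U \<in> carrier_mat m m" and VC: "V \<in> carrier_mat n n"
    using U V by (auto intro: orth_group_carrier)
  have XC: "X \<in> carrier_mat m n" using X svd_carrier[OF UC VC] by simp
  show ?thesis
  proof (rule eq_matI)
    fix a b assume "a < dim_row (U * diag_rect m m (gram_eigvals m n s) * transpose_mat U)"
      "b < dim_col (U * diag_rect m m (gram_eigvals m n s) * transpose_mat U)"
    then have a: "a < m" and b: "b < m" using UC by auto
    have "(X * transpose_mat X) $$ (a,b) = (\<Sum>t<n. X$$(a,t) * X$$(b,t))"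
      using XC a b by (subst index_mult_mat_sum[of _ m n _ m]) auto
    also have "\<dots> = (\<Sum>i<min m n. U$$(a,i) * s$i * s$i * U$$(b,i))"
      by (rule svd_row_inner[OF UC UC V X X a b])
    also have "\<dots> = (\<Sum>i<m. U$$(a,i) * gram_eigvals m n s $ i * U$$(b,i))"
      by (rule sum.mono_neutral_cong_left) (auto simp: gram_eigvals_def power2_eq_square)
    also have "\<dots> = (U * diag_rect m m (gram_eigvals m n s) * transpose_mat U) $$ (a,b)"
      using index_svd[OF UC UC a b] by simp
    finally show "(X * transpose_mat X) $$ (a,b) = (U * diag_rect m m (gram_eigvals m n s) * transpose_mat U) $$ (a,b)" .
  qed (use XC UC in auto)
qed

lemma order_prod_linear:
  "order a (\<Prod>b\<leftarrow>xs. [:- b, 1:]) = count (mset xs) (a :: real)"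
proof (induct xs)
  case (Cons b xs)
  have nz: "[:- b, 1:] \<noteq> 0" "(\<Prod>b\<leftarrow>xs. [:- b, 1:]) \<noteq> (0 :: real poly)"
    by (auto simp: prod_list_zero_iff)
  have "order a (\<Prod>b\<leftarrow>b # xs. [:- b, 1:]) = order a ([:- b, 1:] * (\<Prod>b\<leftarrow>xs. [:- b, 1:]))"
    by simp
  also have "\<dots> = order a [:- b, 1:] + order a (\<Prod>b\<leftarrow>xs. [:- b, 1:])"
    by (rule order_mult) (use nz in \<open>simp only: mult_eq_0_iff, blast\<close>)
  also have "order a [:- b, 1:] = (if a = b then 1 else 0)"
    using order_linear_power[of a "- b" 1] by auto
  finally show ?case using Cons by auto
qed simp

lemma char_poly_diag_rect:
  "char_poly (diag_rect m m (l :: real vec)) = (\<Prod>b\<leftarrow>map (\<lambda>i. l$i) [0..<m]. [:- b, 1:])"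
proof -
  have "upper_triangular (diag_rect m m l)" by (auto simp: upper_triangular_def diag_rect_def)
  moreover have "diag_mat (diag_rect m m l) = map (\<lambda>i. l$i) [0..<m]"
    by (auto simp: diag_mat_def diag_rect_def)
  ultimately show ?thesis using char_poly_upper_triangular[OF diag_rect_carrier] by simp
qed

lemma char_poly_gram_sing_vals:
  assumes "is_sing_vals X s"
  shows "char_poly (X * transpose_mat X)
       = (\<Prod>b\<leftarrow>map (\<lambda>i. gram_eigvals (dim_row X) (dim_col X) s $ i) [0..<dim_row X]. [:- b, 1:])"
proof -
  obtain U V where U: "U \<in> orth_group (dim_row X)" and V: "V \<in> orth_group (dim_col X)"
    and X: "X = U * diag_rect (dim_row X) (dim_col X) s * transpose_mat V"
    using assms unfolding is_sing_vals_def by auto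
  have "similar_mat (X * transpose_mat X) (diag_rect (dim_row X) (dim_row X) (gram_eigvals (dim_row X) (dim_col X) s))"
    by (rule similar_matI[of _ _ U "transpose_mat U" "dim_row X"])
       (use U orth_group_mult_transpose[OF U] gram_svd[OF U V X] in \<open>auto simp: orth_group_def\<close>)
  then show ?thesis using char_poly_similar char_poly_diag_rect by metis
qed

lemma sorted_rev_gram_eigvals:
  assumes "is_sing_vals X s"
  shows "sorted (rev (map (\<lambda>i. gram_eigvals (dim_row X) (dim_col X) s $ i) [0..<dim_row X]))"
proof -
  let ?m = "dim_row X" and ?n = "dim_col X"
  have mono: "s $ j \<le> s $ i" "0 \<le> s $ j" if "i \<le> j" "j < min ?m ?n" for i j
    using assms that unfolding is_sing_vals_def by auto
  have "gram_eigvals ?m ?n s $ l \<le> gram_eigvals ?m ?n s $ k" if "k \<le> l" "l < ?m" for k l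
    using that mono[of k l] by (auto simp: gram_eigvals_def intro: power_mono)
  then show ?thesis by (auto simp: sorted_iff_nth_mono rev_nth)
qed

lemma is_sing_vals_unique:
  assumes s: "is_sing_vals X s" and t: "is_sing_vals X t"
  shows "s = t"
proof -
  let ?m = "dim_row X" and ?n = "dim_col X"
  define eigs where "eigs r = map (\<lambda>i. gram_eigvals ?m ?n r $ i) [0..<?m]" for r
  have "mset (eigs s) = mset (eigs t)"
  proof (rule multiset_eqI)
    fix a
    show "count (mset (eigs s)) a = count (mset (eigs t)) a"
      using char_poly_gram_sing_vals[OF s] char_poly_gram_sing_vals[OF t]
      unfolding eigs_def by (metis order_prod_linear)
  qed
  then have "rev (eigs s) = rev (eigs t)"
    using sorted_rev_gram_eigvals[OF s] sorted_rev_gram_eigvals[OF t] unfolding eigs_def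
    by (metis mset_rev sorted_sort_id sorted_list_of_multiset_mset)
  then have eigs: "eigs s = eigs t" by simp
  show ?thesis
  proof (rule eq_vecI)
    have dims: "dim_vec s = min ?m ?n" "dim_vec t = min ?m ?n" using s t by (auto simp: is_sing_vals_def)
    then show "dim_vec s = dim_vec t" by simp
    fix i assume "i < dim_vec t"
    then have i: "i < min ?m ?n" using dims by simp
    then have "(s$i)^2 = (t$i)^2"
      using arg_cong[OF eigs, of "\<lambda>l. l ! i"] by (simp add: eigs_def gram_eigvals_def)
    moreover have "0 \<le> s$i" "0 \<le> t$i" using s t i dims by (auto simp: is_sing_vals_def)
    ultimately show "s $ i = t $ i" by (simp add: power2_eq_iff_nonneg)
  qed
qed

lemma svd_permute_abs:
  assumes U: "U \<in> orth_group m" and V: "V \<in> orth_group n"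
    and X: "X = U * diag_rect m n s * transpose_mat V" and p: "p permutes {..<min m n}"
  shows "\<exists>U' V'. U' \<in> orth_group m \<and> V' \<in> orth_group n \<and>
           X = U' * diag_rect m n (vec (min m n) (\<lambda>i. \<bar>s $ p i\<bar>)) * transpose_mat V'"
proof -
  let ?k = "min m n"
  define sg where "sg i = (if s $ p i < 0 then -1 else (1::real))" for i
  define U' where "U' = mat m m (\<lambda>(r,i). sg i * U$$(r, p i))"
  define V' where "V' = mat n n (\<lambda>(t,i). 1 * V$$(t, p i))"
  have pm: "p permutes {..<m}" and pn: "p permutes {..<n}"
    using p by (auto elim!: permutes_subset)
  have U': "U' \<in> orth_group m"
    unfolding U'_def by (rule orth_group_perm_sign_cols[OF U pm]) (simp add: sg_def)
  have V': "V' \<in> orth_group n"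
    unfolding V'_def by (rule orth_group_perm_sign_cols[OF V pn]) simp
  have UC: "U \<in> carrier_mat m m" and VC: "V \<in> carrier_mat n n"
    using U V by (auto intro: orth_group_carrier)
  have U'C: "U' \<in> carrier_mat m m" and V'C: "V' \<in> carrier_mat n n"
    using U' V' by (auto intro: orth_group_carrier)
  have "X = U' * diag_rect m n (vec ?k (\<lambda>i. \<bar>s $ p i\<bar>)) * transpose_mat V'"
  proof (rule eq_matI)
    fix a b assume "a < dim_row (U' * diag_rect m n (vec ?k (\<lambda>i. \<bar>s $ p i\<bar>)) * transpose_mat V')"
      "b < dim_col (U' * diag_rect m n (vec ?k (\<lambda>i. \<bar>s $ p i\<bar>)) * transpose_mat V')"
    then have a: "a < m" and b: "b < n" using U'C V'C by auto
    have "(U' * diag_rect m n (vec ?k (\<lambda>i. \<bar>s $ p i\<bar>)) * transpose_mat V') $$ (a,b)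
        = (\<Sum>i<?k. U'$$(a,i) * vec ?k (\<lambda>i. \<bar>s $ p i\<bar>) $ i * V'$$(b,i))"
      by (rule index_svd[OF U'C V'C a b])
    also have "\<dots> = (\<Sum>i<?k. U$$(a,p i) * s$(p i) * V$$(b,p i))"
      by (rule sum.cong) (use a b in \<open>auto simp: U'_def V'_def sg_def abs_if\<close>)
    also have "\<dots> = (\<Sum>i<?k. U$$(a,i) * s$i * V$$(b,i))"
      using sum.permute[OF p, of "\<lambda>i. U$$(a,i) * s$i * V$$(b,i)"] by (simp add: comp_def)
    also have "\<dots> = X $$ (a,b)" using index_svd[OF UC VC a b] X by simp
    finally show "X $$ (a,b) = (U' * diag_rect m n (vec ?k (\<lambda>i. \<bar>s $ p i\<bar>)) * transpose_mat V') $$ (a,b)"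
      by simp
  qed (use X UC VC U'C V'C in auto)
  then show ?thesis using U' V' by blast
qed

lemma is_sing_vals_exists:
  assumes U: "U \<in> orth_group (dim_row X)" and V: "V \<in> orth_group (dim_col X)"
    and X: "X = U * diag_rect (dim_row X) (dim_col X) s * transpose_mat V"
  shows "\<exists>t. is_sing_vals X t"
proof -
  let ?k = "min (dim_row X) (dim_col X)"
  define L where "L = map (\<lambda>i. \<bar>s$i\<bar>) [0..<?k]"
  obtain p where p: "p permutes {..<length L}" and pL: "permute_list p L = rev (sort L)"
    using mset_eq_permutation[of "rev (sort L)" L] by auto
  have p': "p permutes {..<?k}" using p by (simp add: L_def)
  define t where "t = vec ?k (\<lambda>i. \<bar>s $ p i\<bar>)"
  have t_nth: "t $ i = rev (sort L) ! i" if "i < ?k" for i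
    using that permutes_in_image[OF p', of i] pL[symmetric]
    by (simp add: t_def permute_list_def L_def)
  have "t $ j \<le> t $ i" if "i \<le> j" "j < ?k" for i j
  proof -
    have len: "length (sort L) = ?k" by (simp add: L_def)
    have "sort L ! (?k - Suc j) \<le> sort L ! (?k - Suc i)"
      by (rule sorted_nth_mono) (use that len in auto)
    then show ?thesis using that len by (simp add: t_nth rev_nth)
  qed
  moreover obtain U' V' where "U' \<in> orth_group (dim_row X)" "V' \<in> orth_group (dim_col X)"
    "X = U' * diag_rect (dim_row X) (dim_col X) t * transpose_mat V'"
    using svd_permute_abs[OF U V X p'] unfolding t_def by blast
  ultimately have "is_sing_vals X t"
    unfolding is_sing_vals_def by (auto simp: t_def)
  then show ?thesis ..
qed

lemma sing_vals_is_sing_vals: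
  assumes "U \<in> orth_group (dim_row X)" "V \<in> orth_group (dim_col X)"
    "X = U * diag_rect (dim_row X) (dim_col X) s * transpose_mat V"
  shows "is_sing_vals X (sing_vals X)"
proof -
  have "\<exists>!t. is_sing_vals X t" using is_sing_vals_exists[OF assms] is_sing_vals_unique by blast
  then show ?thesis unfolding sing_vals_eq_The by (rule theI')
qed

subsection \<open>The rank-two difference of outer products\<close>

text \<open>The matrix \<open>(a\<^sub>i b\<^sub>j - c\<^sub>i e\<^sub>j)\<close> has rank at most two, so its determinant vanishes; with zero
  off-diagonal entries the determinant is the product of the diagonal.\<close>
lemma rank_two_diag_prod_eq_0:
  fixes a b c e :: "nat \<Rightarrow> real"
  assumes "\<And>i j. i < 3 \<Longrightarrow> j < 3 \<Longrightarrow> i \<noteq> j \<Longrightarrow> a i * b j - c i * e j = 0"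
  shows "(a 0 * b 0 - c 0 * e 0) * (a 1 * b 1 - c 1 * e 1) * (a 2 * b 2 - c 2 * e 2) = 0"
proof -
  define M where "M i j = a i * b j - c i * e j" for i j
  have "M 0 1 = 0" "M 0 2 = 0" "M 1 0 = 0" "M 1 2 = 0" "M 2 0 = 0" "M 2 1 = 0"
    using assms unfolding M_def by auto
  moreover have "M 0 0 * (M 1 1 * M 2 2 - M 1 2 * M 2 1) - M 0 1 * (M 1 0 * M 2 2 - M 1 2 * M 2 0)
        + M 0 2 * (M 1 0 * M 2 1 - M 1 1 * M 2 0) = 0"
    unfolding M_def by (simp add: algebra_simps)
  ultimately have "M 0 0 * M 1 1 * M 2 2 = 0" by (simp add: mult_ac)
  then show ?thesis unfolding M_def .
qed

lemma sing_vals_outer_diff_eq_0: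
  assumes U: "U \<in> orth_group d1" and V: "V \<in> orth_group d2"
    and w: "w \<in> carrier_vec d1" and wbar: "wbar \<in> carrier_vec d1"
    and x: "x \<in> carrier_vec d2" and xbar: "xbar \<in> carrier_vec d2"
    and X: "X = outer w x - outer wbar xbar"
    and svd: "X = U * diag_rect d1 d2 (sing_vals X) * transpose_mat V"
    and i: "2 \<le> i" "i < min d1 d2"
  shows "sing_vals X $ i = 0"
proof -
  let ?s = "sing_vals X"
  have dims: "dim_row X = d1" "dim_col X = d2" using X w x wbar xbar by (auto simp: outer_def)
  have "is_sing_vals X ?s"
    by (rule sing_vals_is_sing_vals[of U X V ?s]) (use U V svd in \<open>simp_all only: dims\<close>)
  then have nonneg: "\<And>i. i < min d1 d2 \<Longrightarrow> 0 \<le> ?s $ i"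
    and mono: "\<And>i j. i \<le> j \<Longrightarrow> j < min d1 d2 \<Longrightarrow> ?s $ j \<le> ?s $ i"
    by (auto simp: is_sing_vals_def dims)
  define a where "a i = (\<Sum>r<d1. U$$(r,i) * w$r)" for i
  define c where "c i = (\<Sum>r<d1. U$$(r,i) * wbar$r)" for i
  define b where "b j = (\<Sum>t<d2. x$t * V$$(t,j))" for j
  define e where "e j = (\<Sum>t<d2. xbar$t * V$$(t,j))" for j
  have coord: "(if i = j then ?s$i else 0) = a i * b j - c i * e j" if "i < d1" "j < d2" for i j
  proof -
    have "(if i = j then ?s$i else 0) = (\<Sum>r<d1. \<Sum>t<d2. U$$(r,i) * X$$(r,t) * V$$(t,j))"
      using svd_coordinates[OF U V svd that] by simp
    also have "\<dots> = (\<Sum>r<d1. \<Sum>t<d2. (U$$(r,i) * w$r) * (x$t * V$$(t,j)) - (U$$(r,i) * wbar$r) * (xbar$t * V$$(t,j)))"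
      using X w x wbar xbar by (intro sum.cong refl) (simp add: outer_def algebra_simps)
    also have "\<dots> = a i * b j - c i * e j"
      by (simp add: a_def b_def c_def e_def sum_subtractf sum_product)
    finally show ?thesis .
  qed
  have "(a 0 * b 0 - c 0 * e 0) * (a 1 * b 1 - c 1 * e 1) * (a 2 * b 2 - c 2 * e 2) = 0"
  proof (rule rank_two_diag_prod_eq_0)
    fix k l :: nat assume "k < 3" "l < 3" "k \<noteq> l"
    then show "a k * b l - c k * e l = 0" using coord[of k l] i by auto
  qed
  then have "?s$0 * ?s$1 * ?s$2 = 0" using coord[of 0 0] coord[of 1 1] coord[of 2 2] i by auto
  moreover have "0 \<le> ?s$2" "?s$2 \<le> ?s$1" "?s$1 \<le> ?s$0"
    using nonneg[of 2] mono[of 1 2] mono[of 0 1] i by auto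
  ultimately have "?s$2 = 0" by (smt (verit) mult_eq_0_iff)
  then show ?thesis using nonneg[of i] mono[of 2 i] i by auto
qed

lemma subdiff_sub_le_frob_inner:
  assumes Y: "Y \<in> subdiff m n h X" and X: "X \<in> carrier_mat m n"
  shows "h X - h (0\<^sub>m m n) \<le> frob_inner Y X"
proof -
  have YC: "Y \<in> carrier_mat m n" and "h (0\<^sub>m m n) \<ge> h X + frob_inner Y (0\<^sub>m m n - X)"
    using Y by (auto simp: subdiff_def)
  moreover have "frob_inner Y (0\<^sub>m m n - X) = - frob_inner Y X"
    using YC X by (simp add: frob_inner_def sum_negf)
  ultimately show ?thesis by simp
qed

theorem lemmaB2:
  fixes d1 d2 :: nat and f :: "real vec \<Rightarrow> real"
    and w wbar x xbar :: "real vec" and X Y U V :: "real mat"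
  assumes d1: "d1 \<ge> 2" and d2: "d2 \<ge> 2"
    and w: "w \<in> carrier_vec d1" and wbar: "wbar \<in> carrier_vec d1"
    and x: "x \<in> carrier_vec d2" and xbar: "xbar \<in> carrier_vec d2"
    and conv: "convex_vec (min d1 d2) f"
    and sym: "symmetric_vec (min d1 d2) f"
    and sgn: "sign_invariant_vec (min d1 d2) f"
    and X_def: "X = outer w x - outer wbar xbar"
    and Y: "Y \<in> subdiff d1 d2 (f_sigma f) X"
    and U: "U \<in> orth_group d1" and V: "V \<in> orth_group d2"
    and svdX: "X = U * diag_rect d1 d2 (sing_vals X) * transpose_mat V"
    and svdY: "Y = U * diag_rect d1 d2 (sing_vals Y) * transpose_mat V"
  shows "max \<bar>sing_vals Y $ 0 * (col V 0 \<bullet> x)\<bar> \<bar>sing_vals Y $ 1 * (col V 1 \<bullet> x)\<bar>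
           \<le> vnorm (Y *\<^sub>v x)
       \<and> max \<bar>sing_vals Y $ 0 * (col U 0 \<bullet> w)\<bar> \<bar>sing_vals Y $ 1 * (col U 1 \<bullet> w)\<bar>
           \<le> vnorm (transpose_mat Y *\<^sub>v w)
       \<and> g_fun f wbar xbar w x - g_fun f wbar xbar wbar xbar
           \<le> sing_vals Y $ 0 * sing_vals X $ 0 + sing_vals Y $ 1 * sing_vals X $ 1"
proof (intro conjI)
  let ?sY = "sing_vals Y" and ?sX = "sing_vals X"
  have UC: "U \<in> carrier_mat d1 d1" and VC: "V \<in> carrier_mat d2 d2"
    using U V by (auto intro: orth_group_carrier)
  have YT: "transpose_mat Y = V * diag_rect d2 d1 ?sY * transpose_mat U"
    using arg_cong[OF svdY, of transpose_mat] transpose_svd[OF UC VC] by (rule trans)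
  show "max \<bar>?sY $ 0 * (col V 0 \<bullet> x)\<bar> \<bar>?sY $ 1 * (col V 1 \<bullet> x)\<bar> \<le> vnorm (Y *\<^sub>v x)"
    using abs_sing_val_inner_col_le_vnorm[OF U V svdY x, of 0] abs_sing_val_inner_col_le_vnorm[OF U V svdY x, of 1] d1 d2
    by simp
  show "max \<bar>?sY $ 0 * (col U 0 \<bullet> w)\<bar> \<bar>?sY $ 1 * (col U 1 \<bullet> w)\<bar> \<le> vnorm (transpose_mat Y *\<^sub>v w)"
    using abs_sing_val_inner_col_le_vnorm[OF V U YT w, of 0] abs_sing_val_inner_col_le_vnorm[OF V U YT w, of 1] d1 d2
    by simp
  have "frob_inner Y X = (\<Sum>i<min d1 d2. ?sY$i * ?sX$i)"
    by (rule frob_inner_svd[OF U V svdY svdX])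
  also have "\<dots> = (\<Sum>i<2. ?sY$i * ?sX$i)"
    using d1 d2 sing_vals_outer_diff_eq_0[OF U V w wbar x xbar X_def svdX]
    by (intro sum.mono_neutral_right) auto
  finally have "frob_inner Y X = ?sY $ 0 * ?sX $ 0 + ?sY $ 1 * ?sX $ 1"
    by (simp add: numeral_2_eq_2)
  moreover have "X \<in> carrier_mat d1 d2" "outer wbar xbar - outer wbar xbar = 0\<^sub>m d1 d2"
    using X_def w x wbar xbar by (auto simp: outer_def)
  ultimately show "g_fun f wbar xbar w x - g_fun f wbar xbar wbar xbar \<le> ?sY $ 0 * ?sX $ 0 + ?sY $ 1 * ?sX $ 1"
    using subdiff_sub_le_frob_inner[OF Y] X_def unfolding g_fun_def by simp
qed

end
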